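(* Let $G,H$ be real Hilbert spaces, $D\subset G$, and $\lambda_F,\lambda_f>0$. Let $F:G\to H$ be $\lambda_F$-UC on $D$ and let $f:H\to\mathbb{R}$ be $\lambda_f$-PL on $F(D)$. Then for all $x\in D$, \[ \tfrac12\|\nabla(f\circ F)(x)\|^2\ge \lambda_F\lambda_f\bigl((f\circ F)(x)-f_*\bigr), \] where $f_*=\inf_{h\in H}f(h)$.
   Context: For $F:G\to H$ between Hilbert spaces, $\partial F(x)\in\mathcal{L}(G,H)$ is the Fréchet derivative at $x$ and $\partial F(x)^*\in\mathcal{L}(H,G)$ its adjoint; for $f:H\to\mathbb{R}$, $\nabla f(x)\in H$ is the gradient. An operator $B\in\mathcal{L}(H,H)$ is $\lambda$-coercive ($\lambda>0$) if $\langle y,By\rangle\ge\lambda\|y\|^2$ for all $y\in H$. $F$ (differentiable on $D$) is $\lambda$-UC (uniformly conditioned) on $D$ if $\partial F(x)\circ\partial F(x)^*$ is $\lambda$-coercive for every $x\in D$. A function $f:H\to\mathbb{R}$ that is bounded below on $H$ and differentiable on a set $E$ is $\lambda$-PL (Polyak–Łojasiewicz) on $E$, $\lambda>0$, if $\tfrac12\|\nabla f(x)\|^2\ge\lambda(f(x)-f_* )$ for all $x\in E$, where $f_*=\inf_{h\in H}f(h)\in\mathbb{R}$. *)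

theory Defs
  imports "HOL-Analysis.Analysis"
begin

definition gradient :: "('a::real_inner \<Rightarrow> real) \<Rightarrow> 'a \<Rightarrow> 'a" where
  "gradient f x = (SOME g. GDERIV f x :> g)"

definition coercive :: "real \<Rightarrow> ('a::real_inner \<Rightarrow> 'a) \<Rightarrow> bool" where
  "coercive lam B \<longleftrightarrow> (\<forall>y. inner y (B y) \<ge> lam * (norm y)\<^sup>2)"

definition UC :: "real \<Rightarrow> ('g::real_inner \<Rightarrow> 'h::real_inner) \<Rightarrow> 'g set \<Rightarrow> bool" where
  "UC lam F D \<longleftrightarrow> (\<forall>x\<in>D. F differentiable (at x) \<and>
      coercive lam (frechet_derivative F (at x) \<circ> adjoint (frechet_derivative F (at x))))"

definition PL :: "real \<Rightarrow> ('h::real_inner \<Rightarrow> real) \<Rightarrow> 'h set \<Rightarrow> bool" where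
  "PL lam f E \<longleftrightarrow> bdd_below (range f) \<and>
     (\<forall>x\<in>E. f differentiable (at x) \<and>
        (1/2) * (norm (gradient f x))\<^sup>2 \<ge> lam * (f x - (INF h. f h)))"

end

theory Submission
  imports Defs
begin

(* By the chain rule, the gradient of f \<circ> F at x is \<partial>F(x)\<^sup>* applied to \<nabla>f(F x), and
   uniform conditioning gives |\<partial>F(x)\<^sup>* y|\<^sup>2 = <y, \<partial>F(x) \<partial>F(x)\<^sup>* y> \<ge> \<lambda>F |y|\<^sup>2; the PL
   inequality of f at F x then finishes. In infinite dimension, gradients and adjoints rest on
   the Riesz representation theorem, which follows from the existence of a minimal-norm
   point on the closed hyperplane {l = 1}: a minimising sequence is Cauchy by the
   parallelogram law and converges by completeness. *)

lemma parallelogram_law: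
  fixes a b :: "'a::real_inner"
  shows "(norm (a + b))\<^sup>2 + (norm (a - b))\<^sup>2 = 2 * (norm a)\<^sup>2 + 2 * (norm b)\<^sup>2"
  by (simp add: power2_norm_eq_inner inner_add_left inner_add_right inner_diff_left
      inner_diff_right inner_commute)

lemma Cauchy_norm_minimizing_sequence:
  fixes s :: "nat \<Rightarrow> 'a::real_inner"
  assumes "convex S" and s_in: "\<And>n. s n \<in> S" and lower: "\<And>y. y \<in> S \<Longrightarrow> d \<le> (norm y)\<^sup>2"
    and lim: "(\<lambda>n. (norm (s n))\<^sup>2) \<longlonglongrightarrow> d"
  shows "Cauchy s"
proof (rule metric_CauchyI)
  have bound: "(norm (s m - s n))\<^sup>2 \<le> 2 * ((norm (s m))\<^sup>2 - d) + 2 * ((norm (s n))\<^sup>2 - d)"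
    for m n
  proof -
    have "(1/2) *\<^sub>R s m + (1/2) *\<^sub>R s n \<in> S"
      using convexD[OF \<open>convex S\<close> s_in s_in] by simp
    then have "d \<le> (norm ((1/2) *\<^sub>R (s m + s n)))\<^sup>2"
      using lower by (simp add: scaleR_add_right)
    then have "4 * d \<le> (norm (s m + s n))\<^sup>2"
      by (simp add: power2_eq_square)
    then show ?thesis
      using parallelogram_law[of "s m" "s n"] by argo
  qed
  fix e :: real
  assume "e > 0"
  then obtain N where N: "\<And>n. n \<ge> N \<Longrightarrow> \<bar>(norm (s n))\<^sup>2 - d\<bar> < e\<^sup>2 / 4"
    using LIMSEQ_D[OF lim, of "e\<^sup>2 / 4"] by auto
  have "dist (s m) (s n) < e" if "m \<ge> N" "n \<ge> N" for m n
  proof -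
    have "(norm (s m - s n))\<^sup>2 < e\<^sup>2"
      using bound[of m n] N[OF \<open>m \<ge> N\<close>] N[OF \<open>n \<ge> N\<close>] by argo
    with \<open>e > 0\<close> show ?thesis
      by (simp add: dist_norm power_less_imp_less_base)
  qed
  then show "\<exists>N. \<forall>m\<ge>N. \<forall>n\<ge>N. dist (s m) (s n) < e"
    by blast
qed

lemma closed_convex_obtains_min_norm:
  fixes S :: "'a::{real_inner,complete_space} set"
  assumes "closed S" and "convex S" and "S \<noteq> {}"
  obtains u where "u \<in> S" and "\<And>y. y \<in> S \<Longrightarrow> norm u \<le> norm y"
proof -
  define d where "d = Inf ((\<lambda>y. (norm y)\<^sup>2) ` S)"
  have bdd: "bdd_below ((\<lambda>y. (norm y)\<^sup>2) ` S)"
    by (rule bdd_belowI[of _ 0]) auto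
  have lower: "d \<le> (norm y)\<^sup>2" if "y \<in> S" for y
    unfolding d_def using that bdd by (simp add: cInf_lower)
  have "d \<in> closure ((\<lambda>y. (norm y)\<^sup>2) ` S)"
    unfolding d_def using \<open>S \<noteq> {}\<close> bdd by (intro closure_contains_Inf) auto
  then obtain r where r: "\<And>n. r n \<in> (\<lambda>y. (norm y)\<^sup>2) ` S" and "r \<longlonglongrightarrow> d"
    unfolding closure_sequential by blast
  have "\<forall>n. \<exists>y\<in>S. r n = (norm y)\<^sup>2"
    using r by blast
  then obtain s where s_in: "\<And>n. s n \<in> S" and r_eq: "\<And>n. r n = (norm (s n))\<^sup>2"
    by metis
  have lim: "(\<lambda>n. (norm (s n))\<^sup>2) \<longlonglongrightarrow> d"
    using \<open>r \<longlonglongrightarrow> d\<close> by (simp add: r_eq[symmetric])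
  have "Cauchy s"
    using \<open>convex S\<close> s_in lower lim by (rule Cauchy_norm_minimizing_sequence)
  then obtain u where u: "s \<longlonglongrightarrow> u"
    using Cauchy_convergent_iff convergent_def by blast
  have "(\<lambda>n. (norm (s n))\<^sup>2) \<longlonglongrightarrow> (norm u)\<^sup>2"
    by (intro tendsto_intros u)
  with lim have "d = (norm u)\<^sup>2"
    by (rule LIMSEQ_unique)
  then have "norm u \<le> norm y" if "y \<in> S" for y
    using lower[OF that] by (auto intro: power2_le_imp_le)
  moreover have "u \<in> S"
    using closed_sequentially[OF \<open>closed S\<close> s_in u] .
  ultimately show ?thesis
    using that by blast
qed

lemma orthogonal_if_norm_le_norm_add_scaleR:
  fixes u k :: "'a::real_inner"
  assumes "\<And>t. norm u \<le> norm (u + t *\<^sub>R k)"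
  shows "inner u k = 0"
proof (rule ccontr)
  define c where "c = inner u k"
  define K where "K = (norm k)\<^sup>2"
  assume "inner u k \<noteq> 0"
  then have "c \<noteq> 0"
    by (simp add: c_def)
  have "K \<ge> 0"
    by (simp add: K_def)
  define t where "t = - c / (K + 1)"
  have c_eq: "c = - t * (K + 1)"
    using \<open>K \<ge> 0\<close> by (simp add: t_def)
  have "(norm u)\<^sup>2 \<le> (norm (u + t *\<^sub>R k))\<^sup>2"
    using assms[of t] by (simp add: power_mono)
  also have "\<dots> = (norm u)\<^sup>2 + 2 * t * c + t\<^sup>2 * K"
    unfolding c_def K_def power2_norm_eq_inner
    by (simp add: inner_add_left inner_add_right inner_commute algebra_simps power2_eq_square)
  also have "\<dots> = (norm u)\<^sup>2 - t\<^sup>2 * (K + 2)"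
    by (simp add: c_eq power2_eq_square algebra_simps)
  finally have "t\<^sup>2 * (K + 2) \<le> 0"
    by simp
  moreover have "t \<noteq> 0"
    using \<open>c \<noteq> 0\<close> c_eq by auto
  ultimately show False
    using \<open>K \<ge> 0\<close> by (simp add: mult_le_0_iff)
qed

theorem riesz_representation:
  fixes l :: "'a::{real_inner,complete_space} \<Rightarrow> real"
  assumes "bounded_linear l"
  obtains w where "\<And>x. l x = inner x w"
proof (cases "\<forall>x. l x = 0")
  case True
  then show ?thesis
    using that[of 0] by simp
next
  case False
  interpret bounded_linear l by fact
  obtain x0 where "l x0 \<noteq> 0"
    using False by blast
  define S where "S = {x. l x = 1}"
  have "closed S"
    unfolding S_def using assms
    by (intro closed_Collect_eq continuous_on_const linear_continuous_on)
  moreover have "convex S"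
    unfolding S_def convex_def by (simp add: add scale algebra_simps)
  moreover have "x0 /\<^sub>R l x0 \<in> S"
    using \<open>l x0 \<noteq> 0\<close> by (simp add: S_def scale)
  ultimately obtain u where "u \<in> S" and min: "\<And>y. y \<in> S \<Longrightarrow> norm u \<le> norm y"
    using closed_convex_obtains_min_norm by blast
  then have "l u = 1"
    by (simp add: S_def)
  have orth: "inner u k = 0" if "l k = 0" for k
    using \<open>l u = 1\<close> that
    by (intro orthogonal_if_norm_le_norm_add_scaleR min) (simp add: S_def add scale)
  have "l x = inner x (u /\<^sub>R (norm u)\<^sup>2)" for x
  proof -
    have "inner u (x - l x *\<^sub>R u) = 0"
      using \<open>l u = 1\<close> by (intro orth) (simp add: diff scale)
    then have "inner x u = l x * (norm u)\<^sup>2"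
      by (simp add: inner_diff_right power2_norm_eq_inner inner_commute)
    moreover have "u \<noteq> 0"
      using \<open>l u = 1\<close> by auto
    ultimately show ?thesis
      by simp
  qed
  then show ?thesis
    by (rule that)
qed

lemma adjoint_works_bounded_linear:
  fixes L :: "'a::{real_inner,complete_space} \<Rightarrow> 'b::real_inner"
  assumes "bounded_linear L"
  shows "inner x (adjoint L y) = inner (L x) y"
proof -
  have "\<forall>y. \<exists>w. \<forall>x. inner (L x) y = inner x w"
  proof
    fix y
    have "bounded_linear (\<lambda>x. inner (L x) y)"
      using bounded_linear_compose[OF bounded_linear_inner_left assms] .
    then obtain w where "\<And>x. inner (L x) y = inner x w"
      using riesz_representation by blast
    then show "\<exists>w. \<forall>x. inner (L x) y = inner x w"
      by blast
  qed
  then show ?thesis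
    unfolding adjoint_def choice_iff
    by (intro someI2_ex[where Q = "\<lambda>L'. inner x (L' y) = inner (L x) y"]) auto
qed

lemma gradient_eqI:
  assumes "GDERIV f x :> g"
  shows "gradient f x = g"
  unfolding gradient_def
proof (rule some_equality)
  fix g'
  assume "GDERIV f x :> g'"
  then have "(\<lambda>h. inner h g') = (\<lambda>h. inner h g)"
    using assms unfolding gderiv_def by (rule has_derivative_unique)
  then show "g' = g"
    by (metis vector_eq_ldot)
qed (rule assms)

lemma gradient_works:
  fixes f :: "'a::{real_inner,complete_space} \<Rightarrow> real"
  assumes "f differentiable (at x)"
  shows "GDERIV f x :> gradient f x"
proof -
  obtain f' where f': "(f has_derivative f') (at x)"
    using assms by (auto simp: differentiable_def)
  obtain g where "\<And>v. f' v = inner v g"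
    using riesz_representation has_derivative_bounded_linear[OF f'] by blast
  then have "f' = (\<lambda>v. inner v g)"
    by (rule ext)
  with f' have "GDERIV f x :> g"
    by (simp add: gderiv_def)
  then show ?thesis
    by (simp add: gradient_eqI)
qed

lemma gradient_comp:
  fixes F :: "'a::{real_inner,complete_space} \<Rightarrow> 'b::{real_inner,complete_space}"
  assumes F': "(F has_derivative L) (at x)" and "f differentiable (at (F x))"
  shows "gradient (f \<circ> F) x = adjoint L (gradient f (F x))"
proof (rule gradient_eqI)
  let ?g = "gradient f (F x)"
  have "((f \<circ> F) has_derivative (\<lambda>v. inner (L v) ?g)) (at x)"
    using diff_chain_at[OF F' gradient_works[OF assms(2), unfolded gderiv_def]]
    by (simp add: o_def)
  then show "GDERIV (f \<circ> F) x :> adjoint L ?g"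
    unfolding gderiv_def
    using adjoint_works_bounded_linear[OF has_derivative_bounded_linear[OF F']] by simp
qed

lemma norm_adjoint_ge_if_coercive:
  fixes L :: "'a::{real_inner,complete_space} \<Rightarrow> 'b::real_inner"
  assumes "bounded_linear L" and "coercive lam (L \<circ> adjoint L)"
  shows "lam * (norm y)\<^sup>2 \<le> (norm (adjoint L y))\<^sup>2"
proof -
  have "(norm (adjoint L y))\<^sup>2 = inner (adjoint L y) (adjoint L y)"
    by (rule power2_norm_eq_inner)
  also have "\<dots> = inner (L (adjoint L y)) y"
    by (rule adjoint_works_bounded_linear[OF assms(1)])
  also have "\<dots> = inner y ((L \<circ> adjoint L) y)"
    by (simp add: inner_commute)
  finally show ?thesis
    using assms(2) by (simp add: coercive_def)
qed

theorem lemma2: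
  fixes F :: "'g::{real_inner,complete_space} \<Rightarrow> 'h::{real_inner,complete_space}"
    and f :: "'h \<Rightarrow> real" and D :: "'g set" and lamF lamf :: real
  assumes "lamF > 0" and "lamf > 0"
    and "UC lamF F D" and "PL lamf f (F ` D)"
  shows "\<forall>x\<in>D. (1/2) * (norm (gradient (f \<circ> F) x))\<^sup>2 \<ge> lamF * lamf * ((f \<circ> F) x - (INF h. f h))"
proof
  fix x
  assume "x \<in> D"
  define L where "L = frechet_derivative F (at x)"
  define g where "g = gradient f (F x)"
  have F': "(F has_derivative L) (at x)" and "coercive lamF (L \<circ> adjoint L)"
    using assms(3) \<open>x \<in> D\<close> by (auto simp: UC_def L_def frechet_derivative_works)
  have "f differentiable (at (F x))" and PL: "lamf * (f (F x) - (INF h. f h)) \<le> (1/2) * (norm g)\<^sup>2"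
    using assms(4) \<open>x \<in> D\<close> by (auto simp: PL_def g_def)
  have "lamF * lamf * ((f \<circ> F) x - (INF h. f h)) \<le> lamF * ((1/2) * (norm g)\<^sup>2)"
    using mult_left_mono[OF PL] \<open>lamF > 0\<close> by (simp add: mult.assoc)
  also have "\<dots> \<le> (1/2) * (norm (adjoint L g))\<^sup>2"
    using norm_adjoint_ge_if_coercive[OF has_derivative_bounded_linear[OF F']
        \<open>coercive lamF (L \<circ> adjoint L)\<close>, of g] by simp
  also have "\<dots> = (1/2) * (norm (gradient (f \<circ> F) x))\<^sup>2"
    using gradient_comp[OF F' \<open>f differentiable (at (F x))\<close>] by (simp add: g_def)
  finally show "(1/2) * (norm (gradient (f \<circ> F) x))\<^sup>2 \<ge> lamF * lamf * ((f \<circ> F) x - (INF h. f h))" .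
qed

end
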